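(* Let $p$ be a polynomial of degree $m$ with $p(t)=dt^m+O(t^{m-1})$, let $q$ be a polynomial of degree $d\ge1$ with $q(t)=t^d+O(t^{d-1})$, let $c\in\mathbb{C}$, $g(z)=\int_0^zp(t)e^{q(t)}dt+c$, suppose $g$ is not of the form $\tilde p e^{\tilde q}$ with polynomials $\tilde p,\tilde q$, let $f(z)=z-g(z)/g'(z)$, and suppose each zero of $g''$ that is not a zero of $g$ or $g'$ is attracted by a periodic cycle of $f$. Then there is $\rho>0$ such that every zero $z_0$ of $g$ which is not a zero of $g'$ and satisfies $|z_0|>\rho$ has $$q(\mathcal{A}^*(z_0))\supset D\Big(q(z_0),\frac{1}{13}\Big).$$
   Context: $\mathcal{A}^*(z_0)$ denotes the immediate basin of attraction of the superattracting fixed point $z_0$ of $f$, i.e. the Fatou component of $f$ containing $z_0$. $D(z_0,r)$ is the open disk. *)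

theory Defs
  imports "HOL-Complex_Analysis.Complex_Analysis" "HOL-Computational_Algebra.Polynomial"
begin

text \<open>At common zeros of g and g' the singularity is removable with value z;
  at zeros of g' which are not zeros of g the map has a pole (value below irrelevant,
  such points are collected in newton_poles).\<close>
definition newton_map :: "(complex \<Rightarrow> complex) \<Rightarrow> complex \<Rightarrow> complex" where
  "newton_map g z = (if deriv g z = 0 then z else z - g z / deriv g z)"

definition newton_poles :: "(complex \<Rightarrow> complex) \<Rightarrow> complex set" where
  "newton_poles g = {z. deriv g z = 0 \<and> g z \<noteq> 0}"

definition normal_family :: "(nat \<Rightarrow> complex \<Rightarrow> complex) \<Rightarrow> complex set \<Rightarrow> bool" where
  "normal_family F U \<longleftrightarrow>
     (\<forall>s :: nat \<Rightarrow> nat. \<exists>r. strict_mono r \<and>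
        ((\<exists>\<phi>. \<forall>K. compact K \<and> K \<subseteq> U \<longrightarrow>
              uniform_limit K (\<lambda>k. F (s (r k))) \<phi> sequentially)
         \<or> (\<forall>K. compact K \<and> K \<subseteq> U \<longrightarrow>
              (\<forall>B. \<forall>\<^sub>F k in sequentially. \<forall>z\<in>K. B \<le> norm (F (s (r k)) z)))))"

text \<open>Fatou set of a meromorphic function f with pole set P: points having an open
  neighbourhood on which all iterates are defined (orbits avoid the poles) and form a
  normal family.\<close>
definition fatou_set :: "(complex \<Rightarrow> complex) \<Rightarrow> complex set \<Rightarrow> complex set" where
  "fatou_set f P = {z. \<exists>U. open U \<and> z \<in> U \<and>
      (\<forall>n. \<forall>w\<in>U. (f ^^ n) w \<notin> P) \<and> normal_family (\<lambda>n. f ^^ n) U}"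

definition immediate_basin :: "(complex \<Rightarrow> complex) \<Rightarrow> complex set \<Rightarrow> complex \<Rightarrow> complex set" where
  "immediate_basin f P z0 = connected_component_set (fatou_set f P) z0"

definition attracted_by_cycle :: "(complex \<Rightarrow> complex) \<Rightarrow> complex set \<Rightarrow> complex \<Rightarrow> bool" where
  "attracted_by_cycle f P w \<longleftrightarrow>
     (\<exists>k \<zeta>. k > 0 \<and> (f ^^ k) \<zeta> = \<zeta> \<and> (\<forall>j<k. (f ^^ j) \<zeta> \<notin> P) \<and>
        norm (deriv (f ^^ k) \<zeta>) < 1 \<and>
        (\<forall>n. (f ^^ n) w \<notin> P) \<and> (\<lambda>n. (f ^^ (n * k)) w) \<longlonglongrightarrow> \<zeta>)"

end

theory Submission
  imports Defs
begin

text \<open>For large \<open>|z0|\<close> the polynomial \<open>q\<close> is almost affine, with slope \<open>a = q'(z0)\<close>, on the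
  disk of radius \<open>2/|a|\<close> about \<open>z0\<close>, and \<open>H = p/q'\<close> is almost constant there. As
  \<open>(H exp q)' = g' + H' exp q\<close>, near a zero \<open>z0\<close> of \<open>g\<close> we have
  \<open>g(z) \<approx> H(z) exp q(z) - H(z0) exp q(z0)\<close>, so in the coordinate \<open>u = q(z) - q(z0)\<close> the Newton
  map acts approximately as \<open>u \<mapsto> u - 1 + exp(-u) = O(u\<^sup>2)\<close>. Hence the bounded set
  \<open>{z. |z - z0| < 1/|a| \<and> |q(z) - q(z0)| < 1/13}\<close> is forward invariant and, by Montel's theorem,
  lies in the Fatou set. A connected part of it containing \<open>z0\<close> is mapped by \<open>q\<close> onto
  \<open>D(q(z0), 1/13)\<close>, since \<open>q\<close> has a Lipschitz inverse branch there, obtained by a contraction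
  argument.\<close>

lemma poly_norm_le_power:
  fixes P :: "'a::real_normed_field poly"
  assumes "degree P \<le> k"
  shows "\<exists>B>0. \<forall>t. 1 \<le> norm t \<longrightarrow> norm (poly P t) \<le> B * norm t ^ k"
proof -
  define S where "S = (\<Sum>i\<le>degree P. norm (coeff P i))"
  have "norm (poly P t) \<le> (S + 1) * norm t ^ k" if t: "1 \<le> norm t" for t
  proof -
    have "norm (poly P t) \<le> (\<Sum>i\<le>degree P. norm (coeff P i * t ^ i))"
      unfolding poly_altdef by (rule norm_sum)
    also have "\<dots> \<le> (\<Sum>i\<le>degree P. norm (coeff P i) * norm t ^ k)"
      using assms t by (intro sum_mono) (auto simp: norm_mult norm_power intro!: mult_left_mono power_increasing)
    also have "\<dots> = S * norm t ^ k"
      by (simp add: S_def sum_distrib_right)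
    also have "\<dots> \<le> (S + 1) * norm t ^ k"
      by (simp add: distrib_right)
    finally show ?thesis .
  qed
  moreover have "S + 1 > 0"
    unfolding S_def by (simp add: add_nonneg_pos sum_nonneg)
  ultimately show ?thesis by blast
qed

lemma poly_norm_ge_power:
  fixes P :: "'a::real_normed_field poly"
  assumes "P \<noteq> 0"
  shows "\<exists>A>0. \<exists>R\<ge>1. \<forall>t. R \<le> norm t \<longrightarrow> A * norm t ^ degree P \<le> norm (poly P t)"
proof (cases "degree P")
  case 0
  then obtain c where "P = [:c:]"
    by (rule degree_eq_zeroE)
  with assms show ?thesis
    by (intro exI[of _ "norm c"]) auto
next
  case (Suc j)
  define c where "c = lead_coeff P"
  define S where "S = (\<Sum>i<degree P. norm (coeff P i))"
  define R where "R = max 1 (2 * S / norm c)"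
  have c: "norm c > 0"
    using assms by (simp add: c_def)
  have "norm c / 2 * norm t ^ degree P \<le> norm (poly P t)" if t: "R \<le> norm t" for t
  proof -
    have t1: "1 \<le> norm t" and tS: "2 * S \<le> norm c * norm t"
      using t c by (auto simp: R_def field_simps)
    have "norm (\<Sum>i<degree P. coeff P i * t ^ i) \<le> (\<Sum>i<degree P. norm (coeff P i) * norm t ^ j)"
      using Suc t1 by (intro order_trans[OF norm_sum] sum_mono)
        (auto simp: norm_mult norm_power intro!: mult_left_mono power_increasing)
    also have "\<dots> = S * norm t ^ j"
      by (simp add: S_def sum_distrib_right)
    also have "\<dots> \<le> norm c / 2 * norm t ^ degree P"
      using mult_right_mono[OF tS, of "norm t ^ j"] Suc by (simp add: field_simps)
    finally have lower: "norm (\<Sum>i<degree P. coeff P i * t ^ i) \<le> norm c / 2 * norm t ^ degree P" .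
    have "poly P t = c * t ^ degree P + (\<Sum>i<degree P. coeff P i * t ^ i)"
      unfolding poly_altdef c_def by (simp add: lessThan_Suc_atMost[symmetric] Suc)
    then have "norm c * norm t ^ degree P \<le> norm (poly P t) + norm (\<Sum>i<degree P. coeff P i * t ^ i)"
      by (metis add_diff_cancel_right' norm_mult norm_power norm_triangle_ineq4)
    with lower show ?thesis by linarith
  qed
  moreover have "R \<ge> 1"
    by (simp add: R_def)
  ultimately show ?thesis
    using c by (intro exI[of _ "norm c / 2"] exI[of _ R]) auto
qed

lemma poly_norm_comparable:
  fixes P :: "'a::real_normed_field poly"
  assumes "P \<noteq> 0"
  shows "\<exists>C>0. \<exists>R. \<forall>t s. R \<le> norm t \<longrightarrow> R \<le> norm s \<longrightarrow> norm t \<le> 2 * norm s \<longrightarrow>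
           norm (poly P t) \<le> C * norm (poly P s)"
proof -
  obtain A R where A: "A > 0" "R \<ge> 1" "\<And>t. R \<le> norm t \<Longrightarrow> A * norm t ^ degree P \<le> norm (poly P t)"
    using poly_norm_ge_power[OF assms] by auto
  obtain B where B: "B > 0" "\<And>t. 1 \<le> norm t \<Longrightarrow> norm (poly P t) \<le> B * norm t ^ degree P"
    using poly_norm_le_power[of P "degree P"] by auto
  have "norm (poly P t) \<le> B * 2 ^ degree P / A * norm (poly P s)"
    if "R \<le> norm t" "R \<le> norm s" "norm t \<le> 2 * norm s" for t s
  proof -
    have "norm (poly P t) \<le> B * norm t ^ degree P"
      using B that A by auto
    also have "\<dots> \<le> B * (2 * norm s) ^ degree P"
      using B that by (intro mult_left_mono power_mono) auto
    also have "\<dots> = B * 2 ^ degree P / A * (A * norm s ^ degree P)"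
      using A by (simp add: power_mult_distrib)
    also have "\<dots> \<le> B * 2 ^ degree P / A * norm (poly P s)"
      using A B that by (intro mult_left_mono) auto
    finally show ?thesis .
  qed
  moreover have "B * 2 ^ degree P / A > 0"
    using A B by simp
  ultimately show ?thesis by blast
qed

lemma poly_log_deriv_bound:
  fixes P :: "'a::real_normed_field poly"
  assumes "P \<noteq> 0"
  shows "\<exists>L\<ge>0. \<exists>R. \<forall>t. R \<le> norm t \<longrightarrow> norm t * norm (poly (pderiv P) t) \<le> L * norm (poly P t)"
proof (cases "degree P")
  case 0
  then show ?thesis
    using pderiv_eq_0_iff[of P] by (intro exI[of _ 0]) auto
next
  case (Suc j)
  obtain A R where A: "A > 0" "R \<ge> 1" "\<And>t. R \<le> norm t \<Longrightarrow> A * norm t ^ degree P \<le> norm (poly P t)"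
    using poly_norm_ge_power[OF assms] by auto
  obtain B where B: "B > 0" "\<And>t. 1 \<le> norm t \<Longrightarrow> norm (poly (pderiv P) t) \<le> B * norm t ^ j"
    using poly_norm_le_power[of "pderiv P" j] Suc by (auto simp: degree_pderiv)
  have "norm t * norm (poly (pderiv P) t) \<le> B / A * norm (poly P t)" if "R \<le> norm t" for t
  proof -
    have "norm t * norm (poly (pderiv P) t) \<le> norm t * (B * norm t ^ j)"
      using B(2)[of t] A(2) that by (intro mult_left_mono) auto
    also have "\<dots> = B / A * (A * norm t ^ degree P)"
      using A by (simp add: Suc)
    also have "\<dots> \<le> B / A * norm (poly P t)"
      using A B that by (intro mult_left_mono) auto
    finally show ?thesis .
  qed
  then show ?thesis
    using A B by (intro exI[of _ "B / A"]) auto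
qed

lemma poly_norm_bounded_below:
  fixes P :: "'a::real_normed_field poly"
  assumes "P \<noteq> 0"
  shows "\<exists>c>0. \<exists>R. \<forall>t. R \<le> norm t \<longrightarrow> c \<le> norm (poly P t)"
proof -
  obtain A R where A: "A > 0" "R \<ge> 1" "\<And>t. R \<le> norm t \<Longrightarrow> A * norm t ^ degree P \<le> norm (poly P t)"
    using poly_norm_ge_power[OF assms] by auto
  have "A \<le> norm (poly P t)" if "R \<le> norm t" for t
  proof -
    have "A * 1 \<le> A * norm t ^ degree P"
      using A that by (intro mult_left_mono one_le_power) auto
    then show ?thesis
      using A(3)[OF that] by simp
  qed
  then show ?thesis
    using A by blast
qed

lemma poly_pair_asymptotics:
  fixes p q :: "complex poly"
  assumes "p \<noteq> 0" and "degree q \<ge> 1"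
  obtains c C L R where "c > 0" "C > 0" "L \<ge> 0"
    and "\<And>t. R \<le> norm t \<Longrightarrow> c \<le> norm (poly (pderiv q) t) \<and> poly p t \<noteq> 0 \<and>
           norm t * norm (poly (pderiv p) t) \<le> L * norm (poly p t) \<and>
           norm t * norm (poly (pderiv (pderiv q)) t) \<le> L * norm (poly (pderiv q) t)"
    and "\<And>t s. R \<le> norm t \<Longrightarrow> R \<le> norm s \<Longrightarrow> norm t \<le> 2 * norm s \<Longrightarrow>
           norm (poly p t) \<le> C * norm (poly p s) \<and> norm (poly (pderiv q) t) \<le> C * norm (poly (pderiv q) s)"
proof -
  have q': "pderiv q \<noteq> 0"
    using assms(2) pderiv_eq_0_iff[of q] by auto
  obtain c R1 where c: "c > 0" "\<And>t. R1 \<le> norm t \<Longrightarrow> c \<le> norm (poly (pderiv q) t)"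
    using poly_norm_bounded_below[OF q'] by blast
  obtain c' R2 where c': "c' > 0" "\<And>t. R2 \<le> norm t \<Longrightarrow> c' \<le> norm (poly p t)"
    using poly_norm_bounded_below[OF assms(1)] by blast
  obtain Cp R3 where Cp: "Cp > 0" "\<And>t s. R3 \<le> norm t \<Longrightarrow> R3 \<le> norm s \<Longrightarrow> norm t \<le> 2 * norm s \<Longrightarrow>
      norm (poly p t) \<le> Cp * norm (poly p s)"
    using poly_norm_comparable[OF assms(1)] by blast
  obtain Cq R4 where Cq: "Cq > 0" "\<And>t s. R4 \<le> norm t \<Longrightarrow> R4 \<le> norm s \<Longrightarrow> norm t \<le> 2 * norm s \<Longrightarrow>
      norm (poly (pderiv q) t) \<le> Cq * norm (poly (pderiv q) s)"
    using poly_norm_comparable[OF q'] by blast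
  obtain Lp R5 where Lp: "Lp \<ge> 0"
    "\<And>t. R5 \<le> norm t \<Longrightarrow> norm t * norm (poly (pderiv p) t) \<le> Lp * norm (poly p t)"
    using poly_log_deriv_bound[OF assms(1)] by blast
  obtain Lq R6 where Lq: "Lq \<ge> 0"
    "\<And>t. R6 \<le> norm t \<Longrightarrow> norm t * norm (poly (pderiv (pderiv q)) t) \<le> Lq * norm (poly (pderiv q) t)"
    using poly_log_deriv_bound[OF q'] by blast
  show ?thesis
  proof
    fix t :: complex assume "max (max (max R1 R2) (max R3 R4)) (max R5 R6) \<le> norm t"
    then show "c \<le> norm (poly (pderiv q) t) \<and> poly p t \<noteq> 0 \<and>
        norm t * norm (poly (pderiv p) t) \<le> max Lp Lq * norm (poly p t) \<and>
        norm t * norm (poly (pderiv (pderiv q)) t) \<le> max Lp Lq * norm (poly (pderiv q) t)"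
      using c c' Lp Lq by (force intro: order_trans[OF _ mult_right_mono])
  next
    fix t s :: complex assume "max (max (max R1 R2) (max R3 R4)) (max R5 R6) \<le> norm t"
      "max (max (max R1 R2) (max R3 R4)) (max R5 R6) \<le> norm s" "norm t \<le> 2 * norm s"
    then show "norm (poly p t) \<le> max Cp Cq * norm (poly p s) \<and>
        norm (poly (pderiv q) t) \<le> max Cp Cq * norm (poly (pderiv q) s)"
      using Cp Cq by (force intro: order_trans[OF _ mult_right_mono])
  qed (use c Cp Lp in auto)
qed

lemma has_field_derivative_linepath_integral:
  fixes F :: "complex \<Rightarrow> complex"
  assumes "F holomorphic_on UNIV"
  shows "((\<lambda>z. contour_integral (linepath 0 z) F) has_field_derivative F x) (at x)"
proof (rule triangle_contour_integrals_starlike_primitive[where S=UNIV and a=0])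
  show "continuous_on UNIV F"
    using assms holomorphic_on_imp_continuous_on by blast
  fix b c :: complex
  have "(F has_contour_integral 0) (linepath 0 b +++ linepath b c +++ linepath c 0)"
    by (rule Cauchy_theorem_triangle_cofinite[where S="{}"])
      (use assms in \<open>auto intro: holomorphic_on_imp_continuous_on[THEN continuous_on_subset]
         holomorphic_on_imp_differentiable_at\<close>)
  then show "contour_integral (linepath 0 b) F + contour_integral (linepath b c) F
      + contour_integral (linepath c 0) F = 0"
    by (rule has_chain_integral_chain_integral3)
qed auto

lemma norm_quotient_deriv_le:
  fixes u u' v v' :: complex and r L1 L2 :: real
  assumes "v \<noteq> 0" "r > 0"
    and "r * norm u' \<le> L1 * norm u" "r * norm v' \<le> L2 * norm v"
  shows "norm ((u' * v - u * v') / v ^ 2) \<le> (L1 + L2) / r * norm (u / v)"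
proof -
  have "norm (u' * v - u * v') \<le> norm u' * norm v + norm u * norm v'"
    by (metis norm_mult norm_triangle_ineq4)
  then have "r * norm (u' * v - u * v') \<le> r * norm u' * norm v + norm u * (r * norm v')"
    using mult_left_mono[of _ _ r] assms(2) by (fastforce simp: algebra_simps)
  also have "\<dots> \<le> L1 * norm u * norm v + norm u * (L2 * norm v)"
    using assms by (intro add_mono mult_right_mono mult_left_mono) auto
  finally have "r * norm (u' * v - u * v') \<le> (L1 + L2) * norm u * norm v"
    by (simp add: algebra_simps)
  then have "r * norm (u' * v - u * v') / (r * norm v ^ 2) \<le> (L1 + L2) * norm u * norm v / (r * norm v ^ 2)"
    using assms(2) by (intro divide_right_mono) auto
  then show ?thesis
    using assms(1,2) by (simp add: norm_divide norm_mult power2_eq_square)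
qed

lemma norm_divide_comparable:
  fixes u u1 v v1 :: "'a::real_normed_field"
  assumes "norm u \<le> C * norm u1" "norm v1 \<le> C * norm v" "v1 \<noteq> 0" "C > 0"
  shows "norm (u / v) \<le> C ^ 2 * norm (u1 / v1)"
proof -
  have "norm u / norm v \<le> C * norm u1 / (norm v1 / C)"
    by (rule frac_le) (use assms in \<open>auto simp: field_simps\<close>)
  also have "\<dots> = C ^ 2 * (norm u1 / norm v1)"
    using assms(4) by (simp add: power2_eq_square)
  finally show ?thesis
    by (simp add: norm_divide)
qed

lemma norm_divide_le:
  fixes x y :: "'a::real_normed_field"
  assumes "norm x \<le> c * norm y" "y \<noteq> 0"
  shows "norm (x / y) \<le> c"
  using assms by (simp add: norm_divide divide_le_eq)

lemma norm_exp_le_exp_norm_diff: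
  fixes x y :: "'a::{real_normed_field,banach}"
  shows "norm (exp x) \<le> norm (exp y) * exp (norm (x - y))"
proof -
  have "exp x = exp y * exp (x - y)"
    by (simp add: exp_add[symmetric])
  then show ?thesis
    by (simp add: norm_mult mult_left_mono norm_exp)
qed

lemma exp_one_thirteenth_le: "exp (1/13 :: real) \<le> 109/100"
  using exp_bound[of "1/13"] by (simp add: power2_eq_square)

lemma exp_101_100_le: "exp (101/100 :: real) \<le> 304/100"
proof -
  have "exp (101/100 :: real) = exp 1 * exp (1/100)"
    by (simp add: exp_add[symmetric])
  also have "\<dots> \<le> 3 * (1 + 1/100 + (1/100)^2)"
    using exp_le exp_bound[of "1/100"] by (intro mult_mono) auto
  finally show ?thesis
    by (simp add: power2_eq_square)
qed

lemma funpow_holomorphic_on_invariant: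
  assumes "f holomorphic_on V" and "f ` V \<subseteq> V"
  shows "(f ^^ n) holomorphic_on V \<and> (f ^^ n) ` V \<subseteq> V"
proof (induction n)
  case (Suc n)
  then have "(f \<circ> f ^^ n) holomorphic_on V"
    using assms by (intro holomorphic_on_compose_gen[OF _ assms(1)]) auto
  with Suc assms(2) show ?case
    by (auto simp: o_def image_subset_iff)
qed (simp add: holomorphic_on_ident)

lemma normal_family_bounded_invariant:
  assumes "open V" "bounded V" "f holomorphic_on V" "f ` V \<subseteq> V"
  shows "normal_family (\<lambda>n. f ^^ n) V"
  unfolding normal_family_def
proof
  fix s :: "nat \<Rightarrow> nat"
  obtain B where B: "\<And>x. x \<in> V \<Longrightarrow> norm x \<le> B"
    using assms(2) by (meson bounded_iff)
  obtain \<phi> r where r: "strict_mono (r :: nat \<Rightarrow> nat)"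
    and lim: "\<And>K. compact K \<Longrightarrow> K \<subseteq> V \<Longrightarrow> uniform_limit K ((\<lambda>k. f ^^ s k) \<circ> r) \<phi> sequentially"
  proof (rule Montel[of V "{h. h holomorphic_on V \<and> h ` V \<subseteq> V}" "\<lambda>k. f ^^ s k"])
    show "\<And>K. compact K \<Longrightarrow> K \<subseteq> V \<Longrightarrow>
        \<exists>B. \<forall>h\<in>{h. h holomorphic_on V \<and> h ` V \<subseteq> V}. \<forall>z\<in>K. norm (h z) \<le> B"
      using B by blast
    show "range (\<lambda>k. f ^^ s k) \<subseteq> {h. h holomorphic_on V \<and> h ` V \<subseteq> V}"
      using funpow_holomorphic_on_invariant[OF assms(3,4)] by auto
  qed (use assms(1) in auto)
  show "\<exists>r. strict_mono r \<and>
      ((\<exists>\<phi>. \<forall>K. compact K \<and> K \<subseteq> V \<longrightarrow> uniform_limit K (\<lambda>k. (f ^^ s (r k))) \<phi> sequentially) \<or>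
       (\<forall>K. compact K \<and> K \<subseteq> V \<longrightarrow> (\<forall>B. \<forall>\<^sub>F k in sequentially. \<forall>z\<in>K. B \<le> norm ((f ^^ s (r k)) z))))"
    using r lim by (intro exI[of _ r] conjI disjI1 exI[of _ \<phi>]) (auto simp: o_def)
qed

lemma bounded_invariant_subset_fatou_set:
  assumes "open V" "bounded V" "f holomorphic_on V" "f ` V \<subseteq> V" "V \<inter> P = {}"
  shows "V \<subseteq> fatou_set f P"
  using assms normal_family_bounded_invariant[OF assms(1-4)] funpow_holomorphic_on_invariant[OF assms(3,4)]
  unfolding fatou_set_def by blast

locale nearly_affine_point =
  fixes P P' Q Q' Q'' :: "complex \<Rightarrow> complex" and z0 :: complex
  assumes P_deriv: "\<And>z. (P has_field_derivative P' z) (at z)"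
    and Q_deriv: "\<And>z. (Q has_field_derivative Q' z) (at z)"
    and Q'_deriv: "\<And>z. (Q' has_field_derivative Q'' z) (at z)"
    and Q'_z0_nonzero: "Q' z0 \<noteq> 0"
    and Q''_small: "\<And>t. t \<in> cball z0 (2 / norm (Q' z0)) \<Longrightarrow> norm (Q'' t) \<le> norm (Q' z0) ^ 2 / 100"
    and P_nonzero: "\<And>t. t \<in> cball z0 (2 / norm (Q' z0)) \<Longrightarrow> P t \<noteq> 0"
    and quotient_deriv_small: "\<And>t s. t \<in> cball z0 (2 / norm (Q' z0)) \<Longrightarrow>
      s \<in> cball z0 (2 / norm (Q' z0)) \<Longrightarrow>
      norm ((P' t * Q' t - P t * Q'' t) / Q' t ^ 2) \<le> norm (Q' z0) / 100 * norm (P s / Q' s)"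
begin

abbreviation a where "a \<equiv> Q' z0"
abbreviation K where "K \<equiv> cball z0 (2 / norm a)"
abbreviation H where "H t \<equiv> P t / Q' t"
abbreviation H' where "H' t \<equiv> (P' t * Q' t - P t * Q'' t) / Q' t ^ 2"
abbreviation trap_region where
  "trap_region \<equiv> {z. norm (z - z0) < 1 / norm a \<and> norm (Q z - Q z0) < 1/13}"

lemma norm_a_pos: "norm a > 0"
  using Q'_z0_nonzero by simp

lemma cball_subset_K: "r \<le> 2 / norm a \<Longrightarrow> cball z0 r \<subseteq> K"
  by (rule subset_cball)

lemma trap_region_subset_K: "z \<in> trap_region \<Longrightarrow> z \<in> cball z0 (1 / norm a) \<and> z \<in> K"
  using norm_a_pos by (auto simp: dist_norm norm_minus_commute field_simps)

lemma Q_holomorphic: "Q holomorphic_on S"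
  using Q_deriv holomorphic_on_def field_differentiable_at_within field_differentiable_def by blast

lemma P_holomorphic: "P holomorphic_on S"
  using P_deriv holomorphic_on_def field_differentiable_at_within field_differentiable_def by blast

lemma Q_taylor:
  assumes "x \<in> K" "y \<in> K"
  shows "norm (Q y - Q x - Q' x * (y - x)) \<le> norm a ^ 2 / 100 * norm (y - x) ^ 2"
proof -
  define F where "F i = (if i = 0 then Q else if i = 1 then Q' else Q'')" for i :: nat
  have "norm (F 0 y - (\<Sum>i\<le>1. F i x * (y - x) ^ i / fact i)) \<le> norm a ^ 2 / 100 * norm (y - x) ^ Suc 1 / fact 1"
  proof (rule complex_Taylor[of K])
    fix i :: nat and t assume "t \<in> K" "i \<le> 1"
    then show "(F i has_field_derivative F (Suc i) t) (at t within K)"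
      using Q_deriv Q'_deriv by (auto simp: F_def le_Suc_eq intro: DERIV_subset)
  qed (use assms Q''_small in \<open>auto simp: F_def\<close>)
  then show ?thesis
    by (simp add: F_def power2_eq_square diff_diff_eq)
qed

lemma Q'_close:
  assumes "x \<in> K"
  shows "norm (Q' x - a) \<le> norm a ^ 2 / 100 * norm (x - z0)"
  using Q''_small assms norm_a_pos
  by (intro field_differentiable_bound[of K]) (auto intro: DERIV_subset[OF Q'_deriv])

lemma Q'_nonzero:
  assumes "x \<in> K"
  shows "Q' x \<noteq> 0"
proof
  assume "Q' x = 0"
  have "norm (x - z0) \<le> 2 / norm a"
    using assms by (simp add: dist_norm norm_minus_commute)
  then have "norm a ^ 2 / 100 * norm (x - z0) \<le> norm a / 50"
    using norm_a_pos mult_left_mono[of "norm (x - z0)" "2 / norm a" "norm a ^ 2 / 100"]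
    by (simp add: power2_eq_square)
  with Q'_close[OF assms] \<open>Q' x = 0\<close> norm_a_pos show False
    by simp
qed

lemma H_deriv:
  assumes "t \<in> K"
  shows "(H has_field_derivative H' t) (at t)"
  using DERIV_divide[OF P_deriv Q'_deriv Q'_nonzero[OF assms]] by (simp add: power2_eq_square)

lemma H_close:
  assumes "z \<in> K"
  shows "norm (H z - H z0) \<le> norm a / 100 * norm (H z) * norm (z - z0)"
  using assms norm_a_pos quotient_deriv_small[OF _ assms]
  by (intro field_differentiable_bound[of K]) (auto intro: DERIV_subset[OF H_deriv])

lemma Q_variation_le:
  assumes "t \<in> cball z0 (1 / norm a)"
  shows "norm (Q t - Q z0) \<le> 101/100"
proof -
  have tK: "t \<in> K" and z0K: "z0 \<in> K"
    using assms cball_subset_K[of "1 / norm a"] norm_a_pos by (auto simp: field_simps)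
  have r: "norm a * norm (t - z0) \<le> 1"
    using assms norm_a_pos by (simp add: dist_norm norm_minus_commute field_simps)
  then have r2: "norm a ^ 2 * norm (t - z0) ^ 2 \<le> 1"
    by (metis mult_nonneg_nonneg norm_ge_zero power_le_one power_mult_distrib)
  have "norm (Q t - Q z0) \<le> norm (a * (t - z0)) + norm (Q t - Q z0 - a * (t - z0))"
    by (rule norm_triangle_sub)
  also have "\<dots> \<le> 1 + 1/100"
    using r r2 Q_taylor[OF z0K tK] by (simp add: norm_mult)
  finally show ?thesis
    by simp
qed

lemma H_relative_change:
  assumes "z \<in> cball z0 (1 / norm a)"
  shows "norm ((H z - H z0) / H z) \<le> 1/100"
proof -
  have zK: "z \<in> K"
    using assms cball_subset_K[of "1 / norm a"] norm_a_pos by (auto simp: field_simps)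
  have "norm (H z - H z0) \<le> norm (H z) / 100 * (norm a * norm (z - z0))"
    using H_close[OF zK] by (simp add: algebra_simps)
  also have "\<dots> \<le> norm (H z) / 100"
    using assms norm_a_pos by (intro mult_left_le) (auto simp: dist_norm norm_minus_commute field_simps)
  finally show ?thesis
    using P_nonzero[OF zK] Q'_nonzero[OF zK] by (intro norm_divide_le) auto
qed

abbreviation inner_disk where "inner_disk \<equiv> cball z0 (1 / (2 * norm a))"

lemma inner_disk_subset_K: "inner_disk \<subseteq> K"
  using norm_a_pos by (intro cball_subset_K) (simp add: field_simps)

lemma Q_nearly_linear:
  assumes "x \<in> inner_disk" "y \<in> inner_disk"
  shows "norm (Q x - a * x - (Q y - a * y)) \<le> norm a / 200 * norm (x - y)"
proof (rule field_differentiable_bound[of inner_disk _ "\<lambda>t. Q' t - a"])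
  fix t assume t: "t \<in> inner_disk"
  show "((\<lambda>t. Q t - a * t) has_field_derivative Q' t - a) (at t within inner_disk)"
    using DERIV_diff[OF Q_deriv DERIV_cmult[OF DERIV_ident, of a]] by (auto intro: DERIV_subset)
  have "norm (Q' t - a) \<le> norm a ^ 2 / 100 * norm (t - z0)"
    using Q'_close t inner_disk_subset_K by blast
  also have "\<dots> \<le> norm a ^ 2 / 100 * (1 / (2 * norm a))"
    using t by (intro mult_left_mono) (auto simp: dist_norm norm_minus_commute)
  also have "\<dots> = norm a / 200"
    using norm_a_pos by (simp add: power2_eq_square)
  finally show "norm (Q' t - a) \<le> norm a / 200" .
qed (use assms in auto)

lemma Q_inverse_lipschitz:
  assumes "x \<in> inner_disk" "y \<in> inner_disk"
  shows "norm (x - y) \<le> 2 / norm a * norm (Q x - Q y)"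
proof -
  have "a * (x - y) = (Q x - Q y) - (Q x - a * x - (Q y - a * y))"
    by (simp add: algebra_simps)
  then have "norm a * norm (x - y) \<le> norm (Q x - Q y) + norm (Q x - a * x - (Q y - a * y))"
    by (metis norm_mult norm_triangle_ineq4)
  then have "norm a * norm (x - y) \<le> 2 * norm (Q x - Q y)"
    using Q_nearly_linear[OF assms] mult_nonneg_nonneg[OF norm_ge_zero norm_ge_zero, of a "x - y"]
    by linarith
  then show ?thesis
    using norm_a_pos by (simp add: field_simps)
qed

lemma Q_affine_error_inner_disk:
  assumes "x \<in> inner_disk"
  shows "norm (Q x - Q z0 - a * (x - z0)) \<le> 1/400"
proof -
  have "norm (Q x - Q z0 - a * (x - z0)) \<le> norm a ^ 2 / 100 * norm (x - z0) ^ 2"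
    using Q_taylor[of z0 x] assms inner_disk_subset_K norm_a_pos by auto
  also have "\<dots> \<le> norm a ^ 2 / 100 * (1 / (2 * norm a)) ^ 2"
    using assms by (intro mult_left_mono power_mono) (auto simp: dist_norm norm_minus_commute)
  also have "\<dots> = 1/400"
    using norm_a_pos by (simp add: power2_eq_square)
  finally show ?thesis .
qed

lemma Q_covers_disk:
  assumes w: "w \<in> ball (Q z0) (1/13)"
  shows "\<exists>z\<in>inner_disk. Q z = w"
proof -
  define T where "T z = z - (Q z - w) / a" for z
  have "\<exists>!z\<in>inner_disk. T z = z"
  proof (rule Banach_fix[of inner_disk "1/200"])
    show "complete inner_disk"
      by (rule compact_imp_complete) simp
    show "inner_disk \<noteq> {}"
      using norm_a_pos by simp
    show "T ` inner_disk \<subseteq> inner_disk"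
    proof clarify
      fix x assume x: "x \<in> inner_disk"
      note remainder = Q_affine_error_inner_disk[OF x]
      have "T x - z0 = ((w - Q z0) - (Q x - Q z0 - a * (x - z0))) / a"
        unfolding T_def using Q'_z0_nonzero by (simp add: field_simps)
      then have "norm (T x - z0) = norm ((w - Q z0) - (Q x - Q z0 - a * (x - z0))) / norm a"
        by (simp add: norm_divide)
      also have "\<dots> \<le> (norm (w - Q z0) + norm (Q x - Q z0 - a * (x - z0))) / norm a"
        by (intro divide_right_mono norm_triangle_ineq4) simp
      also have "\<dots> < (1/13 + 1/400) / norm a"
        using w remainder norm_a_pos by (intro divide_strict_right_mono) (auto simp: dist_norm norm_minus_commute)
      also have "\<dots> \<le> 1 / (2 * norm a)"
        using norm_a_pos by (simp add: field_simps)
      finally show "T x \<in> inner_disk"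
        by (simp add: dist_norm norm_minus_commute)
    qed
  next
    fix x y assume "x \<in> inner_disk" "y \<in> inner_disk"
    then have "norm (Q x - a * x - (Q y - a * y)) / norm a \<le> norm (x - y) / 200"
      using Q_nearly_linear norm_a_pos by (simp add: divide_le_eq mult.commute)
    moreover have "T x - T y = - (Q x - a * x - (Q y - a * y)) / a"
      unfolding T_def using Q'_z0_nonzero by (simp add: field_simps)
    ultimately show "dist (T x) (T y) \<le> 1/200 * dist x y"
      by (simp only: dist_norm norm_divide norm_minus_cancel)
  qed auto
  then obtain z where "z \<in> inner_disk" "T z = z"
    by auto
  then show ?thesis
    unfolding T_def using Q'_z0_nonzero by auto
qed

lemma connected_lift_of_disk:
  "\<exists>U. connected U \<and> z0 \<in> U \<and> U \<subseteq> trap_region \<and> ball (Q z0) (1/13) \<subseteq> Q ` U"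
proof -
  obtain \<psi> where \<psi>: "\<And>w. w \<in> ball (Q z0) (1/13) \<Longrightarrow> \<psi> w \<in> inner_disk \<and> Q (\<psi> w) = w"
    using Q_covers_disk by metis
  have "(2 / norm a)-lipschitz_on (ball (Q z0) (1/13)) \<psi>"
  proof (rule lipschitz_onI)
    fix x y assume "x \<in> ball (Q z0) (1/13)" "y \<in> ball (Q z0) (1/13)"
    then show "dist (\<psi> x) (\<psi> y) \<le> 2 / norm a * dist x y"
      using Q_inverse_lipschitz[of "\<psi> x" "\<psi> y"] \<psi> by (simp add: dist_norm)
  qed (use norm_a_pos in simp)
  then have "connected (\<psi> ` ball (Q z0) (1/13))"
    by (intro connected_continuous_image lipschitz_on_continuous_on) auto
  moreover have "\<psi> (Q z0) = z0"
    using Q_inverse_lipschitz[of "\<psi> (Q z0)" z0] \<psi>[of "Q z0"] norm_a_pos by simp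
  then have "z0 \<in> \<psi> ` ball (Q z0) (1/13)"
    by (metis centre_in_ball image_eqI zero_less_divide_1_iff zero_less_numeral)
  moreover have "\<psi> ` ball (Q z0) (1/13) \<subseteq> trap_region"
  proof clarify
    fix w assume w: "w \<in> ball (Q z0) (1/13)"
    have "norm (\<psi> w - z0) \<le> 1 / (2 * norm a)"
      using \<psi>[OF w] by (simp add: dist_norm norm_minus_commute)
    also have "\<dots> < 1 / norm a"
      using norm_a_pos by (simp add: field_simps)
    finally show "norm (\<psi> w - z0) < 1 / norm a \<and> norm (Q (\<psi> w) - Q z0) < 1/13"
      using \<psi>[OF w] w by (simp add: dist_norm norm_minus_commute)
  qed
  moreover have "ball (Q z0) (1/13) \<subseteq> Q ` \<psi> ` ball (Q z0) (1/13)"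
    using \<psi> by (auto simp: image_iff)
  ultimately show ?thesis
    by blast
qed

end

lemma nearly_affine_pointI:
  fixes P P' Q Q' Q'' :: "complex \<Rightarrow> complex" and z0 :: complex and c C L :: real
  defines "K \<equiv> cball z0 (2 / norm (Q' z0))"
  assumes "\<And>z. (P has_field_derivative P' z) (at z)" "\<And>z. (Q has_field_derivative Q' z) (at z)"
    and "\<And>z. (Q' has_field_derivative Q'' z) (at z)"
    and c: "c > 0" and C: "C > 0" and L: "L \<ge> 0"
    and single: "\<And>t. t \<in> K \<Longrightarrow> c \<le> norm (Q' t) \<and> P t \<noteq> 0 \<and>
      norm t * norm (P' t) \<le> L * norm (P t) \<and> norm t * norm (Q'' t) \<le> L * norm (Q' t)"
    and far: "\<And>t. t \<in> K \<Longrightarrow> 0 < norm t \<and> 100 * L * C \<le> c * norm t \<and> 200 * L * C ^ 2 \<le> c * norm t"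
    and pair: "\<And>t s. t \<in> K \<Longrightarrow> s \<in> K \<Longrightarrow>
      norm (P t) \<le> C * norm (P s) \<and> norm (Q' t) \<le> C * norm (Q' s)"
  shows "nearly_affine_point P P' Q Q' Q'' z0"
proof -
  have z0K: "z0 \<in> K"
    by (simp add: K_def)
  have a: "c \<le> norm (Q' z0)"
    using single[OF z0K] by blast
  have Q'_nonzero: "Q' t \<noteq> 0" if "t \<in> K" for t
    using single[OF that] c by auto
  show ?thesis
  proof (unfold_locales, fold K_def)
    show "Q' z0 \<noteq> 0"
      using Q'_nonzero[OF z0K] .
  next
    fix t assume t: "t \<in> K"
    have t_pos: "0 < norm t" and LC: "L * C \<le> c / 100 * norm t"
      using far[OF t] by auto
    have "norm t * norm (Q'' t) \<le> L * norm (Q' t)"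
      using single[OF t] by blast
    also have "\<dots> \<le> L * (C * norm (Q' z0))"
      using pair[OF t z0K] L by (intro mult_left_mono) auto
    also have "\<dots> \<le> c / 100 * norm t * norm (Q' z0)"
      using mult_right_mono[OF LC norm_ge_zero[of "Q' z0"]] by (simp only: mult.assoc)
    also have "\<dots> \<le> norm t * (norm (Q' z0) ^ 2 / 100)"
      using a t_pos by (simp add: power2_eq_square mult_right_mono mult_left_mono)
    finally show "norm (Q'' t) \<le> norm (Q' z0) ^ 2 / 100"
      using t_pos by simp
    show "P t \<noteq> 0"
      using single[OF t] by blast
  next
    fix t s assume t: "t \<in> K" and s: "s \<in> K"
    have t_pos: "0 < norm t" and LC2: "2 * L * C ^ 2 / norm t \<le> c / 100"
      using far[OF t] by (auto simp: pos_divide_le_eq)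
    have "norm ((P' t * Q' t - P t * Q'' t) / Q' t ^ 2) \<le> (L + L) / norm t * norm (P t / Q' t)"
      by (rule norm_quotient_deriv_le) (use single[OF t] Q'_nonzero[OF t] t_pos in auto)
    also have "\<dots> \<le> (L + L) / norm t * (C ^ 2 * norm (P s / Q' s))"
      using norm_divide_comparable[of "P t" C "P s" "Q' s" "Q' t"] pair[OF t s] pair[OF s t]
        Q'_nonzero[OF s] C L t_pos
      by (intro mult_left_mono) auto
    also have "\<dots> = 2 * L * C ^ 2 / norm t * norm (P s / Q' s)"
      by simp
    also have "\<dots> \<le> norm (Q' z0) / 100 * norm (P s / Q' s)"
      using LC2 a by (intro mult_right_mono) auto
    finally show "norm ((P' t * Q' t - P t * Q'' t) / Q' t ^ 2) \<le> norm (Q' z0) / 100 * norm (P s / Q' s)" .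
  qed (use assms(2-4) in auto)
qed

locale nearly_affine_zero = nearly_affine_point +
  fixes g :: "complex \<Rightarrow> complex"
  assumes g_deriv: "\<And>z. (g has_field_derivative P z * exp (Q z)) (at z)"
    and g_z0: "g z0 = 0"
begin

lemma approx_primitive_error:
  assumes z: "z \<in> cball z0 (1 / norm a)"
  shows "norm (g z - H z * exp (Q z) + H z0 * exp (Q z0)) \<le> 304/10000 * norm (H z) * norm (exp (Q z0))"
proof -
  have K1: "cball z0 (1 / norm a) \<subseteq> K"
    using norm_a_pos by (intro cball_subset_K) (simp add: field_simps)
  have "norm (g z - H z * exp (Q z) - (g z0 - H z0 * exp (Q z0)))
      \<le> norm a / 100 * norm (H z) * (norm (exp (Q z0)) * (304/100)) * norm (z - z0)"
  proof (rule field_differentiable_bound[of "cball z0 (1 / norm a)" _ "\<lambda>t. - (H' t * exp (Q t))"])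
    fix t assume t: "t \<in> cball z0 (1 / norm a)"
    with K1 have tK: "t \<in> K"
      by blast
    have "((\<lambda>t. g t - H t * exp (Q t)) has_field_derivative
        P t * exp (Q t) - (H' t * exp (Q t) + exp (Q t) * Q' t * H t)) (at t)"
      by (intro DERIV_diff g_deriv DERIV_mult H_deriv[OF tK] DERIV_chain2[OF DERIV_exp Q_deriv])
    moreover have "P t * exp (Q t) - (H' t * exp (Q t) + exp (Q t) * Q' t * H t) = - (H' t * exp (Q t))"
      using Q'_nonzero[OF tK] by (simp add: field_simps)
    ultimately show "((\<lambda>t. g t - H t * exp (Q t)) has_field_derivative - (H' t * exp (Q t)))
        (at t within cball z0 (1 / norm a))"
      by (auto intro: DERIV_subset)
    have "norm (exp (Q t)) \<le> norm (exp (Q z0)) * (304/100)"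
      using norm_exp_le_exp_norm_diff[of "Q t" "Q z0"] Q_variation_le[OF t] exp_101_100_le
      by (meson exp_le_cancel_iff mult_left_mono norm_ge_zero order_trans)
    then show "norm (- (H' t * exp (Q t))) \<le> norm a / 100 * norm (H z) * (norm (exp (Q z0)) * (304/100))"
      unfolding norm_minus_cancel norm_mult
      using quotient_deriv_small[OF tK] z K1 by (intro mult_mono) auto
  qed (use z norm_a_pos in auto)
  also have "\<dots> = 304/10000 * norm (H z) * norm (exp (Q z0)) * (norm a * norm (z - z0))"
    by simp
  also have "\<dots> \<le> 304/10000 * norm (H z) * norm (exp (Q z0))"
    using z norm_a_pos by (intro mult_left_le) (auto simp: dist_norm norm_minus_commute field_simps)
  finally show ?thesis
    using g_z0 by simp
qed

lemma exp_norm_trap_le: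
  assumes "z \<in> trap_region"
  shows "exp (norm (Q z - Q z0)) \<le> 109/100"
proof -
  have "exp (norm (Q z - Q z0)) \<le> exp (1/13)"
    using assms by simp
  with exp_one_thirteenth_le show ?thesis
    by linarith
qed

lemma approx_primitive_relative_error:
  assumes z: "z \<in> trap_region"
  shows "norm ((g z - H z * exp (Q z) + H z0 * exp (Q z0)) / (H z * exp (Q z))) \<le> 304/10000 * (109/100)"
proof (rule norm_divide_le)
  have zK: "z \<in> K" and z1: "z \<in> cball z0 (1 / norm a)"
    using trap_region_subset_K[OF z] by auto
  have "norm (exp (Q z0)) \<le> norm (exp (Q z)) * exp (norm (Q z - Q z0))"
    using norm_exp_le_exp_norm_diff[of "Q z0" "Q z"] by (metis norm_minus_commute)
  also have "\<dots> \<le> norm (exp (Q z)) * (109/100)"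
    using exp_norm_trap_le[OF z] by (intro mult_left_mono) auto
  finally have exp_z0: "norm (exp (Q z0)) \<le> norm (exp (Q z)) * (109/100)" .
  have "norm (g z - H z * exp (Q z) + H z0 * exp (Q z0)) \<le> 304/10000 * norm (H z) * norm (exp (Q z0))"
    by (rule approx_primitive_error[OF z1])
  also have "\<dots> \<le> 304/10000 * norm (H z) * (norm (exp (Q z)) * (109/100))"
    using exp_z0 by (intro mult_left_mono) auto
  also have "\<dots> = 304/10000 * (109/100) * norm (H z * exp (Q z))"
    by (simp only: norm_mult ac_simps)
  finally show "norm (g z - H z * exp (Q z) + H z0 * exp (Q z0)) \<le> 304/10000 * (109/100) * norm (H z * exp (Q z))" .
  show "H z * exp (Q z) \<noteq> 0"
    using P_nonzero[OF zK] Q'_nonzero[OF zK] by simp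
qed

lemma newton_quotient_close:
  assumes z: "z \<in> trap_region"
  shows "norm (g z / (H z * exp (Q z)) - (Q z - Q z0)) \<le> 515/10000"
proof -
  define u where "u = Q z - Q z0"
  define E where "E = g z - H z * exp (Q z) + H z0 * exp (Q z0)"
  have zK: "z \<in> K" and z1: "z \<in> cball z0 (1 / norm a)"
    using trap_region_subset_K[OF z] by auto
  have Hz: "H z \<noteq> 0"
    using P_nonzero[OF zK] Q'_nonzero[OF zK] by simp
  have exp_u: "exp (norm u) \<le> 109/100"
    using exp_norm_trap_le[OF z] by (simp add: u_def)
  have "norm (exp (-u) - (1 + -u)) \<le> exp (norm u) * norm u ^ 2"
    using Taylor_exp_field[of "-u" 1] by (simp add: power2_eq_square)
  also have "\<dots> \<le> 109/100 * (1/13)^2"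
    using exp_u z by (intro mult_mono power_mono) (auto simp: u_def)
  finally have taylor: "norm (exp (-u) - (1 + -u)) \<le> 109/100 * (1/13)^2" .
  have "norm (exp (-u)) \<le> 109/100"
    using norm_exp[of "-u"] exp_u by (metis norm_minus_cancel order_trans)
  then have H_term: "norm (exp (-u) * ((H z - H z0) / H z)) \<le> 109/100 * (1/100)"
    unfolding norm_mult using H_relative_change[OF z1] by (intro mult_mono) auto
  have "g z / (H z * exp (Q z)) - u
      = - (exp (-u) - (1 + -u)) + exp (-u) * ((H z - H z0) / H z) + E / (H z * exp (Q z))"
    using Hz by (simp add: E_def u_def exp_diff exp_minus field_simps)
  then have "norm (g z / (H z * exp (Q z)) - u) \<le> norm (exp (-u) - (1 + -u))
      + norm (exp (-u) * ((H z - H z0) / H z)) + norm (E / (H z * exp (Q z)))"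
    by (metis norm_minus_cancel norm_triangle_le norm_triangle_ineq add_right_mono)
  also have "\<dots> \<le> 109/100 * (1/13)^2 + 109/100 * (1/100) + 304/10000 * (109/100)"
    using taylor H_term approx_primitive_relative_error[OF z] unfolding E_def by (intro add_mono)
  finally show ?thesis
    by (simp add: u_def power2_eq_square)
qed

lemma newton_map_eq:
  assumes "z \<in> K"
  shows "newton_map g z = z - g z / (P z * exp (Q z))"
  using P_nonzero[OF assms] DERIV_imp_deriv[OF g_deriv] by (simp add: newton_map_def)

lemma newton_step_eq:
  assumes "z \<in> K"
  shows "newton_map g z - z = - (g z / (H z * exp (Q z))) / Q' z"
proof -
  have "g z / (P z * exp (Q z)) = g z / (H z * exp (Q z)) / Q' z"
    using Q'_nonzero[OF assms] by simp
  then show ?thesis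
    by (simp add: newton_map_eq[OF assms])
qed

lemma newton_step_small:
  assumes z: "z \<in> trap_region"
  shows "norm a * norm (newton_map g z - z) \<le> 14/100"
proof -
  define X where "X = g z / (H z * exp (Q z))"
  have zK: "z \<in> K"
    using trap_region_subset_K[OF z] by auto
  have "norm X \<le> norm (Q z - Q z0) + norm (X - (Q z - Q z0))"
    by (rule norm_triangle_sub)
  with newton_quotient_close[OF z] z have X: "norm X \<le> 129/1000"
    by (simp add: X_def)
  have "norm (Q' z - a) \<le> norm a / 100 * (norm a * norm (z - z0))"
    using Q'_close[OF zK] by (simp add: power2_eq_square algebra_simps)
  also have "\<dots> \<le> norm a / 100"
    using z norm_a_pos by (intro mult_left_le) (auto simp: field_simps)
  finally have "99/100 * norm a \<le> norm (Q' z)"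
    using norm_triangle_ineq2[of a "Q' z"] by (simp add: norm_minus_commute)
  then have "99/100 * (norm a * norm (newton_map g z - z)) \<le> norm (newton_map g z - z) * norm (Q' z)"
    using mult_left_mono[of "99/100 * norm a" "norm (Q' z)" "norm (newton_map g z - z)"]
    by (simp add: algebra_simps)
  also have "\<dots> = norm X"
    using Q'_nonzero[OF zK] by (simp add: newton_step_eq[OF zK] X_def norm_divide norm_mult)
  finally show ?thesis
    using X by linarith
qed

lemma newton_map_trap:
  assumes z: "z \<in> trap_region"
  shows "newton_map g z \<in> trap_region"
proof -
  define z' where "z' = newton_map g z"
  have zK: "z \<in> K" and z0K: "z0 \<in> K"
    using trap_region_subset_K[OF z] norm_a_pos by auto
  have taylor_sq: "norm a ^ 2 / 100 * norm w ^ 2 \<le> c ^ 2 / 100" if "norm a * norm w \<le> c" for w c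
    using that power_mono[OF that, of 2] by (simp add: power_mult_distrib)
  have step: "norm a * norm (z' - z) \<le> 14/100"
    using newton_step_small[OF z] by (simp add: z'_def)
  have "norm a * norm (z' - z0) \<le> norm a * norm (z' - z) + norm a * norm (z - z0)"
    using norm_triangle_ineq[of "z' - z" "z - z0"] norm_a_pos
    by (simp add: distrib_left[symmetric] mult_left_mono)
  also have "\<dots> \<le> 14/100 + 1"
    using step z norm_a_pos by (intro add_mono) (auto simp: field_simps)
  finally have z'_z0: "norm a * norm (z' - z0) \<le> 114/100"
    by simp
  then have z'K: "z' \<in> K"
    using norm_a_pos by (simp add: dist_norm norm_minus_commute field_simps)
  have "Q z' - Q z0 = (Q z - Q z0 - g z / (H z * exp (Q z))) + (Q z' - Q z - Q' z * (z' - z))"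
    using Q'_nonzero[OF zK] by (simp add: z'_def newton_step_eq[OF zK])
  moreover have "norm (Q z' - Q z - Q' z * (z' - z)) \<le> (14/100) ^ 2 / 100"
    using Q_taylor[OF zK z'K] taylor_sq[OF step] by simp
  ultimately have new_u: "norm (Q z' - Q z0) \<le> 517/10000"
    using newton_quotient_close[OF z]
      norm_triangle_ineq[of "Q z - Q z0 - g z / (H z * exp (Q z))" "Q z' - Q z - Q' z * (z' - z)"]
    by (simp add: norm_minus_commute power2_eq_square)
  have "norm (Q z' - Q z0 - a * (z' - z0)) \<le> (114/100) ^ 2 / 100"
    using Q_taylor[OF z0K z'K] taylor_sq[OF z'_z0] by simp
  moreover have "norm a * norm (z' - z0) \<le> norm (Q z' - Q z0) + norm (Q z' - Q z0 - a * (z' - z0))"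
    by (metis norm_mult norm_triangle_sub add.commute diff_add_cancel norm_minus_commute)
  ultimately have "norm a * norm (z' - z0) < 1"
    using new_u by (simp add: power2_eq_square)
  with new_u show ?thesis
    using norm_a_pos by (simp add: z'_def field_simps)
qed

lemma g_holomorphic: "g holomorphic_on S"
  using g_deriv holomorphic_on_def field_differentiable_at_within field_differentiable_def by blast

lemma trap_region_subset_fatou_set: "trap_region \<subseteq> fatou_set (newton_map g) (newton_poles g)"
proof (rule bounded_invariant_subset_fatou_set)
  have "continuous_on UNIV Q"
    using Q_holomorphic holomorphic_on_imp_continuous_on by blast
  then show "open trap_region"
    by (intro open_Collect_conj open_Collect_less continuous_on_diff continuous_on_norm
        continuous_on_const continuous_on_id)
  show "bounded trap_region"
    by (rule bounded_subset[OF bounded_ball[of z0 "1 / norm a"]]) (auto simp: dist_norm norm_minus_commute)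
  have "(\<lambda>z. z - g z / (P z * exp (Q z))) holomorphic_on trap_region"
    using P_nonzero trap_region_subset_K
    by (intro holomorphic_intros g_holomorphic P_holomorphic Q_holomorphic) auto
  then show "newton_map g holomorphic_on trap_region"
    by (rule holomorphic_transform) (use newton_map_eq trap_region_subset_K in auto)
  show "newton_map g ` trap_region \<subseteq> trap_region"
    using newton_map_trap by blast
  show "trap_region \<inter> newton_poles g = {}"
    using P_nonzero trap_region_subset_K DERIV_imp_deriv[OF g_deriv] by (auto simp: newton_poles_def)
qed

lemma disk_subset_Q_immediate_basin:
  "ball (Q z0) (1/13) \<subseteq> Q ` immediate_basin (newton_map g) (newton_poles g) z0"
proof -
  obtain U where U: "connected U" "z0 \<in> U" "U \<subseteq> trap_region" "ball (Q z0) (1/13) \<subseteq> Q ` U"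
    using connected_lift_of_disk by blast
  have "U \<subseteq> immediate_basin (newton_map g) (newton_poles g) z0"
    unfolding immediate_basin_def
    using U trap_region_subset_fatou_set by (intro connected_component_maximal) auto
  with U(4) show ?thesis
    by blast
qed

end

lemma eventually_nearly_affine_point:
  fixes p q :: "complex poly"
  assumes "p \<noteq> 0" and "degree q \<ge> 1"
  shows "\<forall>\<^sub>F z0 in at_infinity. nearly_affine_point (poly p) (poly (pderiv p))
           (poly q) (poly (pderiv q)) (poly (pderiv (pderiv q))) z0"
proof -
  obtain c C L R where c: "c > 0" and C: "C > 0" and L: "L \<ge> 0"
    and single: "\<And>t. R \<le> norm t \<Longrightarrow> c \<le> norm (poly (pderiv q) t) \<and> poly p t \<noteq> 0 \<and>
           norm t * norm (poly (pderiv p) t) \<le> L * norm (poly p t) \<and>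
           norm t * norm (poly (pderiv (pderiv q)) t) \<le> L * norm (poly (pderiv q) t)"
    and pair: "\<And>t s. R \<le> norm t \<Longrightarrow> R \<le> norm s \<Longrightarrow> norm t \<le> 2 * norm s \<Longrightarrow>
           norm (poly p t) \<le> C * norm (poly p s) \<and> norm (poly (pderiv q) t) \<le> C * norm (poly (pderiv q) s)"
    using poly_pair_asymptotics[OF assms] by blast
  define R0 where "R0 = max (max 1 R) (max (100 * L * C / c) (200 * L * C ^ 2 / c))"
  have "1 \<le> R0" "R \<le> R0" "100 * L * C / c \<le> R0" "200 * L * C ^ 2 / c \<le> R0"
    by (auto simp: R0_def)
  then have R0: "1 \<le> R0" "R \<le> R0" "100 * L * C \<le> c * R0" "200 * L * C ^ 2 \<le> c * R0"
    using c by (auto simp: pos_divide_le_eq mult.commute)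
  have "nearly_affine_point (poly p) (poly (pderiv p)) (poly q) (poly (pderiv q)) (poly (pderiv (pderiv q))) z0"
    if z0: "8 / c \<le> norm z0" "2 * R0 \<le> norm z0" for z0
  proof -
    have a: "c \<le> norm (poly (pderiv q) z0)"
      using single[of z0] z0 R0(1,2) by auto
    have "2 / norm (poly (pderiv q) z0) \<le> 2 / c"
      by (rule frac_le) (use a c in auto)
    also have "\<dots> \<le> norm z0 / 4"
      using z0 c by (simp add: field_simps)
    finally have annulus: "3/4 * norm z0 \<le> norm t \<and> norm t \<le> 5/4 * norm z0"
      if "t \<in> cball z0 (2 / norm (poly (pderiv q) z0))" for t
      using that norm_triangle_sub[of t z0] norm_triangle_sub[of z0 t]
      by (simp add: dist_norm norm_minus_commute)
    have far: "R \<le> norm t" "c * R0 \<le> c * norm t" "0 < norm t"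
      if "t \<in> cball z0 (2 / norm (poly (pderiv q) z0))" for t
      using annulus[OF that] z0 R0(1,2) c by (auto intro: mult_left_mono)
    show ?thesis
    proof (rule nearly_affine_pointI[OF _ _ _ c C L])
      fix t assume t: "t \<in> cball z0 (2 / norm (poly (pderiv q) z0))"
      show "c \<le> norm (poly (pderiv q) t) \<and> poly p t \<noteq> 0 \<and>
          norm t * norm (poly (pderiv p) t) \<le> L * norm (poly p t) \<and>
          norm t * norm (poly (pderiv (pderiv q)) t) \<le> L * norm (poly (pderiv q) t)"
        by (rule single[OF far(1)[OF t]])
      show "0 < norm t \<and> 100 * L * C \<le> c * norm t \<and> 200 * L * C ^ 2 \<le> c * norm t"
        using far(2,3)[OF t] R0(3,4) by linarith
    next
      fix t s assume t: "t \<in> cball z0 (2 / norm (poly (pderiv q) z0))"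
        and s: "s \<in> cball z0 (2 / norm (poly (pderiv q) z0))"
      have "norm t \<le> 2 * norm s"
        using annulus[OF t] annulus[OF s] by linarith
      then show "norm (poly p t) \<le> C * norm (poly p s) \<and>
          norm (poly (pderiv q) t) \<le> C * norm (poly (pderiv q) s)"
        by (rule pair[OF far(1)[OF t] far(1)[OF s]])
    qed (rule poly_DERIV)+
  qed
  then show ?thesis
    unfolding eventually_at_infinity by (intro exI[of _ "max (8 / c) (2 * R0)"]) auto
qed

theorem corollary7p6:
  fixes p q :: "complex poly" and m d :: nat and c :: complex
    and g :: "complex \<Rightarrow> complex"
  assumes "degree p = m" and "lead_coeff p = of_nat d"
    and "degree q = d" and "d \<ge> 1" and "lead_coeff q = 1"
    and g_def: "\<And>z. g z = contour_integral (linepath 0 z) (\<lambda>t. poly p t * exp (poly q t)) + c"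
    and not_pexp: "\<not> (\<exists>pt qt :: complex poly. \<forall>z. g z = poly pt z * exp (poly qt z))"
    and free_crit: "\<And>w. deriv (deriv g) w = 0 \<Longrightarrow> g w \<noteq> 0 \<Longrightarrow> deriv g w \<noteq> 0 \<Longrightarrow>
                   attracted_by_cycle (newton_map g) (newton_poles g) w"
  shows "\<exists>\<rho>>0. \<forall>z0. g z0 = 0 \<and> deriv g z0 \<noteq> 0 \<and> norm z0 > \<rho> \<longrightarrow>
           ball (poly q z0) (1/13) \<subseteq> poly q ` immediate_basin (newton_map g) (newton_poles g) z0"
proof -
  have "p \<noteq> 0"
    using assms(2,4) by auto
  have g_eq: "g = (\<lambda>z. contour_integral (linepath 0 z) (\<lambda>t. poly p t * exp (poly q t)) + c)"
    using g_def by blast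
  have "(\<lambda>t. poly p t * exp (poly q t)) holomorphic_on UNIV"
    by (intro holomorphic_intros)
  then have g_deriv: "(g has_field_derivative poly p z * exp (poly q z)) (at z)" for z
    using DERIV_add[OF has_field_derivative_linepath_integral DERIV_const[of c]] g_eq by simp
  obtain R where R: "\<And>z0. R \<le> norm z0 \<Longrightarrow> nearly_affine_point (poly p) (poly (pderiv p))
      (poly q) (poly (pderiv q)) (poly (pderiv (pderiv q))) z0"
    using eventually_nearly_affine_point[OF \<open>p \<noteq> 0\<close>] assms(3,4)
    unfolding eventually_at_infinity by auto
  show ?thesis
  proof (intro exI[of _ "max 1 R"] conjI allI impI)
    fix z0 assume z0: "g z0 = 0 \<and> deriv g z0 \<noteq> 0 \<and> max 1 R < norm z0"
    interpret nearly_affine_zero "poly p" "poly (pderiv p)" "poly q" "poly (pderiv q)"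
        "poly (pderiv (pderiv q))" z0 g
      using R[of z0] z0 g_deriv by (intro nearly_affine_zero.intro nearly_affine_zero_axioms.intro) auto
    show "ball (poly q z0) (1/13) \<subseteq> poly q ` immediate_basin (newton_map g) (newton_poles g) z0"
      by (rule disk_subset_Q_immediate_basin)
  qed simp
qed

end
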